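(* Let $T_1,T_2\in B(H)$ satisfy $\|T_1T_1^*+T_2T_2^*\|\le1$, and let $p(t)=\sum_{j=0}^Nc_jt^j$ be a polynomial in one complex variable. Then $$\|p(T_1)T_2\|\le\Big(\int_{\mathbb T}|p(t)|^2\,dm(t)\Big)^{1/2}=\Big(\sum_{j=0}^N|c_j|^2\Big)^{1/2},$$ where $m$ is normalized Lebesgue measure on the unit circle $\mathbb T$.
   Context: $H$ is a Hilbert space and $\|\cdot\|$ the operator norm on $B(H)$. *)

theory Defs
  imports "HOL-Analysis.Analysis"
begin

class complex_vector = real_vector +
  fixes scaleC :: "complex \<Rightarrow> 'a \<Rightarrow> 'a"
  assumes scaleC_add_right: "scaleC a (x + y) = scaleC a x + scaleC a y"
    and scaleC_add_left: "scaleC (a + b) x = scaleC a x + scaleC b x"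
    and scaleC_scaleC: "scaleC a (scaleC b x) = scaleC (a * b) x"
    and scaleC_one: "scaleC 1 x = x"
    and scaleR_scaleC: "scaleR r x = scaleC (complex_of_real r) x"

text \<open>Inner product: linear in the second, conjugate-linear in the first argument.\<close>
class complex_inner = complex_vector + real_normed_vector +
  fixes cinner :: "'a \<Rightarrow> 'a \<Rightarrow> complex"
  assumes cinner_commute: "cinner x y = cnj (cinner y x)"
    and cinner_add_right: "cinner x (y + z) = cinner x y + cinner x z"
    and cinner_scaleC_right: "cinner x (scaleC r y) = r * cinner x y"
    and cinner_self_norm: "cinner x x = complex_of_real ((norm x)\<^sup>2)"

class chilbert = complex_inner + complete_space

definition bounded_clinear :: "('a::complex_inner \<Rightarrow> 'b::complex_inner) \<Rightarrow> bool" where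
  "bounded_clinear f \<longleftrightarrow> bounded_linear f \<and> (\<forall>c x. f (scaleC c x) = scaleC c (f x))"

definition cadjoint :: "('a::complex_inner \<Rightarrow> 'a) \<Rightarrow> ('a \<Rightarrow> 'a)" where
  "cadjoint T = (THE S. \<forall>x y. cinner (T x) y = cinner x (S y))"

definition poly_op :: "(nat \<Rightarrow> complex) \<Rightarrow> nat \<Rightarrow> ('a::complex_vector \<Rightarrow> 'a) \<Rightarrow> 'a \<Rightarrow> 'a" where
  "poly_op c N T x = (\<Sum>j\<le>N. scaleC (c j) ((T ^^ j) x))"

end

theory Submission
  imports Defs
begin

text \<open>
  Write \<open>S\<^sub>i\<close> for the adjoint of \<open>T\<^sub>i\<close>. The hypothesis says
  \<open>\<parallel>S\<^sub>1 z\<parallel>\<^sup>2 + \<parallel>S\<^sub>2 z\<parallel>\<^sup>2 \<le> \<parallel>z\<parallel>\<^sup>2\<close>; applied along the orbit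
  \<open>y, S\<^sub>1 y, S\<^sub>1\<^sup>2 y, \<dots>\<close> it telescopes to
  \<open>\<Sum>\<^sub>j \<parallel>S\<^sub>2 S\<^sub>1\<^sup>j y\<parallel>\<^sup>2 \<le> \<parallel>y\<parallel>\<^sup>2\<close>. Since
  \<open>\<langle>y, p(T\<^sub>1) T\<^sub>2 x\<rangle> = \<Sum>\<^sub>j c\<^sub>j \<langle>S\<^sub>2 S\<^sub>1\<^sup>j y, x\<rangle>\<close>, the Cauchy-Schwarz
  inequality in \<open>\<ell>\<^sup>2\<close> bounds this by \<open>(\<Sum>\<^sub>j |c\<^sub>j|\<^sup>2)\<^sup>1\<^sup>/\<^sup>2 \<parallel>y\<parallel> \<parallel>x\<parallel>\<close>.
  The integral equals \<open>\<Sum>\<^sub>j |c\<^sub>j|\<^sup>2\<close> because the functions \<open>e\<^sup>i\<^sup>j\<^sup>t\<close> are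
  orthonormal on the circle.

  The adjoints exist by the Riesz representation theorem, which comes from the parallelogram law:
  unit vectors on which a functional of norm 1 is nearly 1 form a Cauchy sequence, and its limit
  represents the functional.
\<close>

section \<open>Complex inner product spaces\<close>

lemma cinner_zero_right [simp]: "cinner x (0::'a::complex_inner) = 0"
  using cinner_add_right [of x 0 0] by simp

lemma cinner_zero_left [simp]: "cinner (0::'a::complex_inner) x = 0"
  by (metis cinner_commute cinner_zero_right complex_cnj_zero)

lemma cinner_add_left: "cinner (x + y) (z::'a::complex_inner) = cinner x z + cinner y z"
  by (metis cinner_add_right cinner_commute complex_cnj_add)

lemma cinner_scaleC_left: "cinner (scaleC a x) (y::'a::complex_inner) = cnj a * cinner x y"
  by (metis cinner_commute cinner_scaleC_right complex_cnj_cnj complex_cnj_mult)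

lemma cinner_diff_right: "cinner x (y - z) = cinner x y - cinner x (z::'a::complex_inner)"
  using cinner_add_right [of x "y - z" z] by simp

lemma cinner_sum_right: "cinner x (\<Sum>i\<in>A. f i) = (\<Sum>i\<in>A. cinner x (f i::'a::complex_inner))"
  by (induction A rule: infinite_finite_induct) (simp_all add: cinner_add_right)

lemma cnj_mult_self: "cnj z * z = complex_of_real ((cmod z)\<^sup>2)"
  by (metis complex_norm_square mult.commute)

lemma Re_cinner_self [simp]: "Re (cinner x x) = (norm (x::'a::complex_inner))\<^sup>2"
  by (simp add: cinner_self_norm)

lemma power2_norm_add:
  "(norm (x + y))\<^sup>2 = (norm x)\<^sup>2 + (norm y)\<^sup>2 + 2 * Re (cinner x (y::'a::complex_inner))"
proof -
  have "cinner (x + y) (x + y) = cinner x x + cinner y y + (cinner x y + cnj (cinner x y))"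
    by (simp add: cinner_add_left cinner_add_right cinner_commute [of y x])
  then have "Re (cinner (x + y) (x + y)) = Re (cinner x x) + Re (cinner y y) + 2 * Re (cinner x y)"
    by simp
  then show ?thesis
    by simp
qed

lemma parallelogram_law:
  "(norm (x + y))\<^sup>2 + (norm (x - y))\<^sup>2 = 2 * (norm x)\<^sup>2 + 2 * (norm (y::'a::complex_inner))\<^sup>2"
  using power2_norm_add [of x y] power2_norm_add [of x "- y"] cinner_diff_right [of x 0 y]
  by simp

lemma Re_cinner_le_norm: "Re (cinner x y) \<le> norm x * norm (y::'a::complex_inner)"
proof -
  have "(norm (x + y))\<^sup>2 \<le> (norm x + norm y)\<^sup>2"
    by (simp add: norm_triangle_ineq power_mono)
  then show ?thesis
    unfolding power2_norm_add by (simp add: power2_eq_square algebra_simps)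
qed

lemma norm_scaleC [simp]: "norm (scaleC a x) = cmod a * norm (x::'a::complex_inner)"
proof -
  have "cinner (scaleC a x) (scaleC a x) = (cnj a * a) * cinner x x"
    by (simp add: cinner_scaleC_left cinner_scaleC_right mult_ac)
  then have "(norm (scaleC a x))\<^sup>2 = (cmod a * norm x)\<^sup>2"
    by (metis cinner_self_norm cnj_mult_self of_real_eq_iff of_real_mult power_mult_distrib)
  then show ?thesis
    by (simp add: power2_eq_iff_nonneg)
qed

lemma norm_cinner_le: "cmod (cinner x y) \<le> norm x * norm (y::'a::complex_inner)"
proof (cases "cinner x y = 0")
  case False
  define a where "a = cnj (cinner x y) / cmod (cinner x y)"
  have "cinner x (scaleC a y) = cmod (cinner x y)"
    using False by (simp add: a_def cinner_scaleC_right cnj_mult_self power2_eq_square)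
  then have "cmod (cinner x y) = Re (cinner x (scaleC a y))"
    by simp
  also have "\<dots> \<le> norm x * norm (scaleC a y)"
    by (rule Re_cinner_le_norm)
  also have "\<dots> = norm x * norm y"
    using False by (simp add: a_def norm_divide)
  finally show ?thesis .
qed simp

lemma cinner_eqI:
  assumes "\<And>x. cinner x u = cinner x v"
  shows "u = (v::'a::complex_inner)"
proof -
  have "cinner (u - v) (u - v) = 0"
    using assms [of "u - v"] by (simp add: cinner_diff_right)
  then show ?thesis
    by (simp add: cinner_self_norm)
qed

lemma norm_le_if_cinner_le:
  assumes "0 \<le> K" and "\<And>y. cmod (cinner y u) \<le> K * norm y"
  shows "norm (u::'a::complex_inner) \<le> K"
proof -
  have "norm u * norm u \<le> K * norm u"
    using assms(2) [of u] by (simp add: cinner_self_norm power2_eq_square norm_mult)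
  then show ?thesis
    using assms(1) by (cases "u = 0") simp_all
qed

instantiation complex :: complex_inner
begin

definition scaleC_complex_def: "scaleC a (z::complex) = a * z"

definition cinner_complex_def: "cinner (w::complex) z = cnj w * z"

instance
proof
  fix a b x y z :: complex and r :: real
  show "scaleC a (x + y) = scaleC a x + scaleC a y" "scaleC (a + b) x = scaleC a x + scaleC b x"
    "scaleC a (scaleC b x) = scaleC (a * b) x" "scaleC 1 x = x"
    "r *\<^sub>R x = scaleC (complex_of_real r) x"
    by (simp_all add: scaleC_complex_def distrib_left distrib_right scaleR_conv_of_real)
  show "cinner x y = cnj (cinner y x)" "cinner x (y + z) = cinner x y + cinner x z"
    "cinner x (scaleC a y) = a * cinner x y"
    by (simp_all add: cinner_complex_def scaleC_complex_def distrib_left mult.left_commute)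
  show "cinner x x = complex_of_real ((norm x)\<^sup>2)"
    unfolding cinner_complex_def by (rule cnj_mult_self)
qed

end

lemma scaleC_complex [simp]: "scaleC a (z::complex) = a * z"
  by (simp add: scaleC_complex_def)

lemma bounded_clinear_imp_bounded_linear: "bounded_clinear f \<Longrightarrow> bounded_linear f"
  by (simp add: bounded_clinear_def)

lemma bounded_clinear_scaleC: "bounded_clinear f \<Longrightarrow> f (scaleC a x) = scaleC a (f x)"
  by (simp add: bounded_clinear_def)

lemma bounded_clinear_compose:
  "bounded_clinear f \<Longrightarrow> bounded_clinear g \<Longrightarrow> bounded_clinear (\<lambda>x. f (g x))"
  by (simp add: bounded_clinear_def bounded_linear_compose)

lemma bounded_clinear_cinner_right: "bounded_clinear (cinner (y::'a::complex_inner))"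
  unfolding bounded_clinear_def
proof
  show "bounded_linear (cinner y)"
  proof (rule bounded_linear_intro [where K = "norm y"])
    show "cinner y (x + z) = cinner y x + cinner y z" for x z
      by (rule cinner_add_right)
    show "cinner y (r *\<^sub>R x) = r *\<^sub>R cinner y x" for r x
      by (simp add: scaleR_scaleC cinner_scaleC_right scaleR_conv_of_real)
    show "norm (cinner y x) \<le> norm x * norm y" for x
      by (metis norm_cinner_le mult.commute)
  qed
qed (simp add: cinner_scaleC_right)

section \<open>Riesz representation and adjoints\<close>

lemma exists_unit_vector_norm_gt:
  assumes "bounded_linear f" and "0 \<le> b" and "b < onorm f"
  shows "\<exists>x. norm x = 1 \<and> b < norm (f x)"
proof (rule ccontr)
  interpret f: bounded_linear f by (rule assms(1))
  assume "\<nexists>x. norm x = 1 \<and> b < norm (f x)"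
  then have unit: "norm (f x) \<le> b" if "norm x = 1" for x
    using that by force
  have "norm (f x) \<le> b * norm x" for x
  proof (cases "x = 0")
    case False
    have "f x = norm x *\<^sub>R f (x /\<^sub>R norm x)"
      using False by (simp flip: f.scale)
    then show ?thesis
      using unit [of "x /\<^sub>R norm x"] False by (simp add: mult.commute mult_left_mono)
  qed simp
  then have "onorm f \<le> b"
    by (rule onorm_bound [OF assms(2)])
  with assms(3) show False
    by simp
qed

lemma cinner_eq_0_if_norm_minimal:
  assumes "\<And>t. norm z \<le> norm (z + scaleC t v)"
  shows "cinner z v = 0"
proof (rule ccontr)
  define c where "c = cinner z v"
  assume "cinner z v \<noteq> 0"
  then have "c \<noteq> 0" and "v \<noteq> 0"
    by (auto simp: c_def)
  define t where "t = - cnj c / of_real ((norm v)\<^sup>2)"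
  \<comment> \<open>\<open>z + t v\<close> is \<open>z\<close> minus its projection onto \<open>v\<close>\<close>
  have "cmod t = cmod c / (norm v)\<^sup>2"
    by (simp add: t_def norm_divide norm_power)
  then have "(cmod t * norm v)\<^sup>2 = (cmod c)\<^sup>2 / (norm v)\<^sup>2"
    using \<open>v \<noteq> 0\<close> by (simp add: power_divide power_mult_distrib power2_eq_square)
  moreover have "Re (cinner z (scaleC t v)) = - (cmod c)\<^sup>2 / (norm v)\<^sup>2"
    by (simp add: cinner_scaleC_right t_def cnj_mult_self flip: c_def)
  ultimately have "(norm (z + scaleC t v))\<^sup>2 = (norm z)\<^sup>2 - (cmod c)\<^sup>2 / (norm v)\<^sup>2"
    by (simp add: power2_norm_add)
  also have "\<dots> < (norm z)\<^sup>2"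
    using \<open>c \<noteq> 0\<close> \<open>v \<noteq> 0\<close> by simp
  finally show False
    using assms [of t] by (simp add: power_mono leD)
qed

lemma norm_diff_power2_le_if_norming:
  fixes f :: "'a::complex_inner \<Rightarrow> complex"
  assumes "bounded_linear f" and "\<And>x. cmod (f x) \<le> norm x"
    and "norm x \<le> 1" and "norm y \<le> 1" and "f x = of_real r" and "f y = of_real s"
  shows "(norm (x - y))\<^sup>2 \<le> 8 - 4 * r - 4 * s"
proof -
  interpret f: bounded_linear f by (rule assms(1))
  have "r + s \<le> norm (x + y)"
    using assms(2) [of "x + y"] f.add assms(5,6)
    by (metis abs_ge_self norm_of_real of_real_add order_trans)
  have "(norm x)\<^sup>2 \<le> 1" "(norm y)\<^sup>2 \<le> 1"
    using assms(3,4) by (simp_all add: power_le_one)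
  then have diff: "(norm (x - y))\<^sup>2 \<le> 4 - (norm (x + y))\<^sup>2"
    using parallelogram_law [of x y] by linarith
  show ?thesis
  proof (cases "0 \<le> r + s")
    case True
    have "(r + s)\<^sup>2 \<le> (norm (x + y))\<^sup>2"
      using \<open>r + s \<le> norm (x + y)\<close> True by (rule power_mono)
    moreover have "(r + s - 2)\<^sup>2 = (r + s)\<^sup>2 - 4 * r - 4 * s + 4"
      by (simp add: power2_eq_square algebra_simps)
    ultimately show ?thesis
      using diff zero_le_power2 [of "r + s - 2"] by linarith
  next
    case False
    then show ?thesis
      using diff zero_le_power2 [of "norm (x + y)"] by linarith
  qed
qed

lemma Cauchy_if_norming:
  fixes f :: "'a::complex_inner \<Rightarrow> complex"
  assumes "bounded_linear f" and "\<And>x. cmod (f x) \<le> norm x"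
    and "\<And>n. norm (x n) \<le> 1" and "\<And>n. f (x n) = of_real (r n)" and "r \<longlonglongrightarrow> 1"
  shows "Cauchy x"
proof (rule CauchyI)
  fix e :: real
  assume "0 < e"
  then obtain M where M: "\<And>n. n \<ge> M \<Longrightarrow> dist (r n) 1 < e\<^sup>2 / 8"
    using assms(5) [unfolded lim_sequentially, rule_format, of "e\<^sup>2 / 8"] by auto
  have "norm (x m - x n) < e" if "m \<ge> M" and "n \<ge> M" for m n
  proof -
    have "(norm (x m - x n))\<^sup>2 \<le> 8 - 4 * r m - 4 * r n"
      by (rule norm_diff_power2_le_if_norming [OF assms(1,2,3,3,4,4)])
    also have "\<dots> < e\<^sup>2"
      using M [OF that(1)] M [OF that(2)] unfolding dist_real_def abs_less_iff by linarith
    finally show ?thesis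
      using \<open>0 < e\<close> by (simp add: power_less_imp_less_base)
  qed
  then show "\<exists>M. \<forall>m\<ge>M. \<forall>n\<ge>M. norm (x m - x n) < e"
    by blast
qed

lemma obtain_norming_sequence:
  fixes f :: "'a::complex_inner \<Rightarrow> complex"
  assumes "bounded_clinear f" and "onorm f = 1"
  obtains x r where "\<And>n. norm (x n) \<le> 1" and "\<And>n. f (x n) = of_real (r n)" and "r \<longlonglongrightarrow> 1"
proof -
  have f: "bounded_linear f"
    using assms(1) by (rule bounded_clinear_imp_bounded_linear)
  have "\<exists>u. norm u = 1 \<and> 1 - 1 / real (Suc n) < cmod (f u)" for n
    using exists_unit_vector_norm_gt [OF f] assms(2) by simp
  then obtain u where u: "\<And>n. norm (u n) = 1" "\<And>n. 1 - 1 / real (Suc n) < cmod (f (u n))"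
    by metis
  define r where "r n = cmod (f (u n))" for n
  define x where "x n = scaleC (cnj (f (u n)) / r n) (u n)" for n
  have r_pos: "0 < r n" for n
  proof -
    have "0 \<le> 1 - 1 / real (Suc n)"
      by simp
    then show ?thesis
      using u(2) [of n] unfolding r_def by linarith
  qed
  have "f (x n) = of_real (r n)" for n
  proof -
    have "f (x n) = cnj (f (u n)) * f (u n) / of_real (r n)"
      by (simp add: x_def bounded_clinear_scaleC [OF assms(1)])
    also have "\<dots> = of_real (r n)"
      using r_pos [of n] by (simp add: cnj_mult_self power2_eq_square flip: r_def)
    finally show ?thesis .
  qed
  moreover have "norm (x n) \<le> 1" for n
    using r_pos [of n] by (simp add: x_def norm_divide u(1) r_def)
  moreover have "r \<longlonglongrightarrow> 1"
  proof (rule tendsto_sandwich [where f = "\<lambda>n. 1 - 1 / real (Suc n)" and h = "\<lambda>n. 1"])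
    show "\<forall>\<^sub>F n in sequentially. 1 - 1 / real (Suc n) \<le> r n"
      using u(2) by (simp add: r_def less_imp_le)
    have "r n \<le> 1" for n
      using onorm [OF f, of "u n"] u(1) assms(2) by (simp add: r_def)
    then show "\<forall>\<^sub>F n in sequentially. r n \<le> 1"
      by simp
    show "(\<lambda>n. 1 - 1 / real (Suc n)) \<longlonglongrightarrow> 1"
      using tendsto_diff [OF tendsto_const LIMSEQ_inverse_real_of_nat] by (simp add: inverse_eq_divide)
  qed simp
  ultimately show ?thesis
    using that by blast
qed

lemma bounded_clinear_norm_attained:
  fixes f :: "'a::chilbert \<Rightarrow> complex"
  assumes "bounded_clinear f" and "onorm f = 1"
  shows "\<exists>z. norm z \<le> 1 \<and> f z = 1"
proof -
  have f: "bounded_linear f"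
    using assms(1) by (rule bounded_clinear_imp_bounded_linear)
  have bound: "cmod (f x) \<le> norm x" for x
    using onorm [OF f, of x] assms(2) by simp
  obtain x r where x: "\<And>n. norm (x n) \<le> 1" "\<And>n. f (x n) = of_real (r n)" and "r \<longlonglongrightarrow> 1"
    using obtain_norming_sequence [OF assms] by blast
  then have "Cauchy x"
    by (intro Cauchy_if_norming [OF f bound])
  then obtain z where z: "x \<longlonglongrightarrow> z"
    using Cauchy_convergent_iff convergent_def by blast
  have "(\<lambda>n. f (x n)) \<longlonglongrightarrow> f z"
    using f z by (rule bounded_linear.tendsto)
  moreover have "(\<lambda>n. f (x n)) \<longlonglongrightarrow> 1"
    using tendsto_of_real [OF \<open>r \<longlonglongrightarrow> 1\<close>] by (simp add: x(2))
  ultimately have "f z = 1"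
    by (rule LIMSEQ_unique)
  moreover have "norm z \<le> 1"
    using tendsto_norm [OF z] x(1) by (intro LIMSEQ_le_const2 [where X = "\<lambda>n. norm (x n)"]) auto
  ultimately show ?thesis
    by blast
qed

lemma functional_eq_cinner_if_norming:
  fixes f :: "'a::complex_inner \<Rightarrow> complex"
  assumes "bounded_clinear f" and "\<And>x. cmod (f x) \<le> norm x" and "norm z \<le> 1" and "f z = 1"
  shows "f y = cinner z y"
proof -
  interpret f: bounded_linear f
    using assms(1) by (rule bounded_clinear_imp_bounded_linear)
  have f_scaleC: "f (scaleC a x) = a * f x" for a x
    using bounded_clinear_scaleC [OF assms(1)] by simp
  have "norm z = 1"
    using assms(2) [of z] assms(3,4) by simp
  have "cinner z v = 0" if "f v = 0" for v
  proof (rule cinner_eq_0_if_norm_minimal)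
    show "norm z \<le> norm (z + scaleC t v)" for t
      using assms(2) [of "z + scaleC t v"] by (simp add: f.add f_scaleC that assms(4) \<open>norm z = 1\<close>)
  qed
  then have "cinner z (y - scaleC (f y) z) = 0"
    by (simp add: f.diff f_scaleC assms(4))
  then show ?thesis
    using \<open>norm z = 1\<close> by (simp add: cinner_diff_right cinner_scaleC_right cinner_self_norm)
qed

theorem riesz_representation:
  fixes f :: "'a::chilbert \<Rightarrow> complex"
  assumes "bounded_clinear f"
  shows "\<exists>z. \<forall>x. f x = cinner z x"
proof -
  have f: "bounded_linear f"
    using assms by (rule bounded_clinear_imp_bounded_linear)
  define M where "M = onorm f"
  show ?thesis
  proof (cases "M = 0")
    case True
    then show ?thesis
      using onorm_eq_0 [OF f] by (intro exI [of _ 0]) (simp add: M_def)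
  next
    case False
    then have "0 < M"
      using onorm_pos_le [OF f] by (simp add: M_def)
    define g where "g = (\<lambda>x. inverse M *\<^sub>R f x)"
    have "bounded_linear g"
      unfolding g_def by (rule bounded_linear_const_scaleR [OF f])
    moreover have "g (scaleC a x) = scaleC a (g x)" for a x
      by (simp add: g_def bounded_clinear_scaleC [OF assms] scaleR_conv_of_real mult.left_commute)
    ultimately have g: "bounded_clinear g"
      by (simp add: bounded_clinear_def)
    have "onorm g = 1"
      using \<open>0 < M\<close> unfolding g_def onorm_scaleR [OF f] M_def [symmetric] by simp
    then obtain z where "norm z \<le> 1" "g z = 1"
      using bounded_clinear_norm_attained [OF g] by blast
    then have "g x = cinner z x" for x
      using onorm [OF bounded_clinear_imp_bounded_linear [OF g]] \<open>onorm g = 1\<close>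
      by (intro functional_eq_cinner_if_norming [OF g]) auto
    then have "f x = cinner (scaleC M z) x" for x
      using \<open>0 < M\<close> by (simp add: g_def cinner_scaleC_left scaleR_conv_of_real field_simps)
    then show ?thesis
      by blast
  qed
qed

lemma cinner_cadjoint:
  fixes T :: "'a::chilbert \<Rightarrow> 'a"
  assumes "bounded_clinear T"
  shows "cinner (T x) y = cinner x (cadjoint T y)"
proof -
  have "\<exists>z. \<forall>x. cinner y (T x) = cinner z x" for y
    by (rule riesz_representation, rule bounded_clinear_compose [OF bounded_clinear_cinner_right assms])
  then obtain S where "\<And>y x. cinner y (T x) = cinner (S y) x"
    by metis
  then have S: "\<And>x y. cinner (T x) y = cinner x (S y)"
    by (metis cinner_commute)
  have "cadjoint T = S"
    unfolding cadjoint_def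
  proof (rule the_equality)
    fix S'
    assume S': "\<forall>x y. cinner (T x) y = cinner x (S' y)"
    show "S' = S"
    proof (rule ext, rule cinner_eqI)
      show "cinner x (S' y) = cinner x (S y)" for x y
        using S' by (simp flip: S)
    qed
  qed (use S in blast)
  then show ?thesis
    by (simp add: S)
qed

lemma cinner_cadjoint_right:
  fixes T :: "'a::chilbert \<Rightarrow> 'a"
  assumes "bounded_clinear T"
  shows "cinner y (T x) = cinner (cadjoint T y) x"
  by (metis assms cinner_cadjoint cinner_commute)

lemma cinner_funpow_cadjoint:
  fixes T :: "'a::chilbert \<Rightarrow> 'a"
  assumes "bounded_clinear T"
  shows "cinner y ((T ^^ j) x) = cinner ((cadjoint T ^^ j) y) x"
proof (induction j arbitrary: y)
  case (Suc j)
  have "cinner y ((T ^^ Suc j) x) = cinner (cadjoint T y) ((T ^^ j) x)"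
    by (simp add: cinner_cadjoint_right [OF assms])
  also have "\<dots> = cinner ((cadjoint T ^^ Suc j) y) x"
    by (simp add: Suc funpow_swap1)
  finally show ?case .
qed simp

lemma bounded_clinear_cadjoint:
  fixes T :: "'a::chilbert \<Rightarrow> 'a"
  assumes "bounded_clinear T"
  shows "bounded_clinear (cadjoint T)"
proof -
  interpret T: bounded_linear T
    using assms by (rule bounded_clinear_imp_bounded_linear)
  obtain K where "0 < K" and K: "\<And>x. norm (T x) \<le> norm x * K"
    using T.pos_bounded by blast
  let ?S = "cadjoint T"
  have S_add: "?S (x + y) = ?S x + ?S y" for x y
    by (rule cinner_eqI) (simp add: cinner_add_right flip: cinner_cadjoint [OF assms])
  have S_scaleC: "?S (scaleC a x) = scaleC a (?S x)" for a x
    by (rule cinner_eqI) (simp add: cinner_scaleC_right flip: cinner_cadjoint [OF assms])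
  have "norm (?S y) \<le> norm y * K" for y
  proof -
    have "(norm (?S y))\<^sup>2 = Re (cinner (T (?S y)) y)"
      by (simp add: cinner_cadjoint [OF assms])
    also have "\<dots> \<le> norm (?S y) * K * norm y"
      using Re_cinner_le_norm K by (metis mult_right_mono norm_ge_zero order_trans)
    finally show ?thesis
      using \<open>0 < K\<close> by (cases "?S y = 0") (simp_all add: power2_eq_square mult_ac)
  qed
  then have "bounded_linear ?S"
    by (intro bounded_linear_intro [where K = K] S_add) (simp_all add: scaleR_scaleC S_scaleC)
  then show ?thesis
    by (simp add: bounded_clinear_def S_scaleC)
qed

section \<open>Row contractions\<close>

lemma norm_cadjoint_row_le:
  fixes T1 T2 :: "'a::chilbert \<Rightarrow> 'a"
  assumes "bounded_clinear T1" and "bounded_clinear T2"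
    and "onorm (\<lambda>x. T1 (cadjoint T1 x) + T2 (cadjoint T2 x)) \<le> 1"
  shows "(norm (cadjoint T1 z))\<^sup>2 + (norm (cadjoint T2 z))\<^sup>2 \<le> (norm z)\<^sup>2"
proof -
  let ?A = "\<lambda>x. T1 (cadjoint T1 x) + T2 (cadjoint T2 x)"
  have "bounded_linear ?A"
    by (rule bounded_linear_add; rule bounded_linear_compose;
        simp add: bounded_clinear_imp_bounded_linear bounded_clinear_cadjoint assms)
  then have "norm (?A z) \<le> norm z"
    using onorm [of ?A z] mult_right_mono [OF assms(3) norm_ge_zero, of z] by simp
  have "(norm (cadjoint T1 z))\<^sup>2 + (norm (cadjoint T2 z))\<^sup>2 = Re (cinner (?A z) z)"
    by (simp add: cinner_add_left cinner_cadjoint [OF assms(1)] cinner_cadjoint [OF assms(2)])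
  also have "\<dots> \<le> norm (?A z) * norm z"
    by (rule Re_cinner_le_norm)
  also have "\<dots> \<le> (norm z)\<^sup>2"
    using \<open>norm (?A z) \<le> norm z\<close> by (simp add: power2_eq_square mult_right_mono)
  finally show ?thesis .
qed

lemma sum_power2_norm_funpow_le:
  fixes S :: "'a::real_normed_vector \<Rightarrow> 'a" and R :: "'a \<Rightarrow> 'b::real_normed_vector"
  assumes "\<And>z. (norm (S z))\<^sup>2 + (norm (R z))\<^sup>2 \<le> (norm z)\<^sup>2"
  shows "(\<Sum>j\<le>n. (norm (R ((S ^^ j) y)))\<^sup>2) + (norm ((S ^^ Suc n) y))\<^sup>2 \<le> (norm y)\<^sup>2"
proof (induction n)
  case 0
  then show ?case
    using assms [of y] by simp
next
  case (Suc n)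
  then show ?case
    using assms [of "(S ^^ Suc n) y"] by simp
qed

lemma norm_sum_cinner_le:
  fixes u :: "'i \<Rightarrow> 'a::complex_inner"
  shows "cmod (\<Sum>j\<in>A. c j * cinner (u j) x)
    \<le> L2_set (\<lambda>j. cmod (c j)) A * L2_set (\<lambda>j. norm (u j)) A * norm x"
proof -
  have "cmod (\<Sum>j\<in>A. c j * cinner (u j) x) \<le> (\<Sum>j\<in>A. \<bar>cmod (c j)\<bar> * \<bar>norm (u j)\<bar> * norm x)"
    by (rule order_trans [OF norm_sum sum_mono])
      (simp add: norm_mult mult.assoc mult_left_mono norm_cinner_le)
  also have "\<dots> \<le> L2_set (\<lambda>j. cmod (c j)) A * L2_set (\<lambda>j. norm (u j)) A * norm x"
    unfolding sum_distrib_right [symmetric] by (intro mult_right_mono L2_set_mult_ineq) simp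
  finally show ?thesis .
qed

lemma onorm_poly_op_le:
  fixes T1 T2 :: "'a::chilbert \<Rightarrow> 'a"
  assumes "bounded_clinear T1" and "bounded_clinear T2"
    and "onorm (\<lambda>x. T1 (cadjoint T1 x) + T2 (cadjoint T2 x)) \<le> 1"
  shows "onorm (\<lambda>x. poly_op c N T1 (T2 x)) \<le> L2_set (\<lambda>j. cmod (c j)) {..N}"
proof (rule onorm_bound)
  let ?L = "L2_set (\<lambda>j. cmod (c j)) {..N}"
  let ?u = "\<lambda>y j. cadjoint T2 ((cadjoint T1 ^^ j) y)"
  show "0 \<le> ?L"
    by simp
  fix x
  have norms: "L2_set (\<lambda>j. norm (?u y j)) {..N} \<le> norm y" for y
  proof -
    have "(\<Sum>j\<le>N. (norm (?u y j))\<^sup>2) \<le> (norm y)\<^sup>2"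
      using sum_power2_norm_funpow_le [OF norm_cadjoint_row_le [OF assms], where n = N and y = y]
        zero_le_power2 [of "norm ((cadjoint T1 ^^ Suc N) y)"]
      by linarith
    then show ?thesis
      unfolding L2_set_def by (simp add: real_le_lsqrt)
  qed
  have "cmod (cinner y (poly_op c N T1 (T2 x))) \<le> ?L * norm x * norm y" for y
  proof -
    have "cinner y (poly_op c N T1 (T2 x)) = (\<Sum>j\<le>N. c j * cinner (?u y j) x)"
      by (simp add: poly_op_def cinner_sum_right cinner_scaleC_right
          cinner_funpow_cadjoint [OF assms(1)] cinner_cadjoint_right [OF assms(2)])
    then have "cmod (cinner y (poly_op c N T1 (T2 x)))
        \<le> ?L * L2_set (\<lambda>j. norm (?u y j)) {..N} * norm x"
      by (simp only: norm_sum_cinner_le)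
    also have "\<dots> \<le> ?L * norm y * norm x"
      by (intro mult_right_mono mult_left_mono norms) simp_all
    finally show ?thesis
      by (simp only: mult_ac)
  qed
  then show "norm (poly_op c N T1 (T2 x)) \<le> ?L * norm x"
    by (rule norm_le_if_cinner_le [rotated]) simp
qed

section \<open>Parseval's identity for polynomials on the circle\<close>

lemma has_integral_exp_int_multiple:
  "((\<lambda>t. exp (t *\<^sub>R (\<i> * of_int k))) has_integral (if k = 0 then complex_of_real (2 * pi) else 0))
    {0..2 * pi}"
proof (cases "k = 0")
  case True
  then show ?thesis
    using has_integral_const_real [of "1::complex" 0 "2 * pi"] by (simp add: scaleR_conv_of_real)
next
  case False
  define a where "a = \<i> * of_int k"
  have "a \<noteq> 0"
    using False by (simp add: a_def)
  have "((\<lambda>t. a * exp (t *\<^sub>R a)) has_integral (exp ((2 * pi) *\<^sub>R a) - exp (0 *\<^sub>R a)))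
      {0..2 * pi}"
    by (rule fundamental_theorem_of_calculus)
      (auto intro: has_vector_derivative_at_within exp_scaleR_has_vector_derivative_left)
  moreover have "exp ((2 * pi) *\<^sub>R a) = 1"
    using exp_integer_2pi [of "of_int k"] by (simp add: a_def scaleR_conv_of_real mult_ac)
  ultimately have "((\<lambda>t. inverse a * (a * exp (t *\<^sub>R a))) has_integral inverse a * 0) {0..2 * pi}"
    by (intro has_integral_mult_right) simp
  moreover have "inverse a * (a * w) = w" for w
    using \<open>a \<noteq> 0\<close> by (simp flip: mult.assoc)
  ultimately show ?thesis
    using False by (simp add: a_def)
qed

lemma exp_i_power_mult_cnj_power:
  fixes t :: real
  shows "exp (\<i> * t) ^ j * cnj (exp (\<i> * t)) ^ k = exp (t *\<^sub>R (\<i> * of_int (int j - int k)))"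
proof -
  have "exp (\<i> * t) ^ j * cnj (exp (\<i> * t)) ^ k
      = exp (of_nat j * (\<i> * t) + of_nat k * cnj (\<i> * t))"
    by (simp only: exp_of_nat_mult exp_cnj exp_add)
  also have "of_nat j * (\<i> * t) + of_nat k * cnj (\<i> * t) = t *\<^sub>R (\<i> * of_int (int j - int k))"
    by (simp add: scaleR_conv_of_real algebra_simps)
  finally show ?thesis .
qed

lemma parseval_polynomial_circle:
  fixes c :: "nat \<Rightarrow> complex"
  shows "((\<lambda>t. (cmod (\<Sum>j\<le>N. c j * exp (\<i> * t) ^ j))\<^sup>2) has_integral
    2 * pi * (\<Sum>j\<le>N. (cmod (c j))\<^sup>2)) {0..2 * pi}"
proof -
  define G where "G t = (\<Sum>j\<le>N. \<Sum>k\<le>N. c j * cnj (c k) * exp (t *\<^sub>R (\<i> * of_int (int j - int k))))"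
    for t :: real
  have square: "(cmod (\<Sum>j\<le>N. c j * exp (\<i> * t) ^ j))\<^sup>2 = Re (G t)" for t :: real
  proof -
    define z where "z = (\<Sum>j\<le>N. c j * exp (\<i> * t) ^ j)"
    have "z * cnj z = (\<Sum>j\<le>N. \<Sum>k\<le>N. c j * exp (\<i> * t) ^ j * cnj (c k * exp (\<i> * t) ^ k))"
      unfolding z_def cnj_sum by (rule sum_product)
    also have "\<dots> = (\<Sum>j\<le>N. \<Sum>k\<le>N. c j * cnj (c k) * (exp (\<i> * t) ^ j * cnj (exp (\<i> * t)) ^ k))"
      by (intro sum.cong refl) (simp add: mult_ac)
    also have "\<dots> = G t"
      unfolding G_def exp_i_power_mult_cnj_power ..
    finally show ?thesis
      by (metis Re_complex_of_real complex_norm_square z_def)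
  qed
  \<comment> \<open>only the diagonal terms \<open>j = k\<close> survive integration\<close>
  have diagonal: "(\<Sum>k\<le>N. c j * cnj (c k) * (if j = k then complex_of_real (2 * pi) else 0))
      = of_real (2 * pi * (cmod (c j))\<^sup>2)" if "j \<le> N" for j
  proof -
    have "(\<Sum>k\<le>N. c j * cnj (c k) * (if j = k then complex_of_real (2 * pi) else 0))
        = (\<Sum>k\<le>N. if j = k then c j * cnj (c j) * complex_of_real (2 * pi) else 0)"
      by (intro sum.cong refl) simp
    also have "\<dots> = of_real (2 * pi * (cmod (c j))\<^sup>2)"
      using that by (simp add: mult_ac flip: complex_norm_square)
    finally show ?thesis .
  qed
  have "(G has_integral (\<Sum>j\<le>N. \<Sum>k\<le>N. c j * cnj (c k) *
      (if int j - int k = 0 then complex_of_real (2 * pi) else 0))) {0..2 * pi}"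
    unfolding G_def
    by (intro has_integral_sum finite_atMost has_integral_mult_right has_integral_exp_int_multiple)
  also have "(\<Sum>j\<le>N. \<Sum>k\<le>N. c j * cnj (c k) *
      (if int j - int k = 0 then complex_of_real (2 * pi) else 0))
      = of_real (2 * pi * (\<Sum>j\<le>N. (cmod (c j))\<^sup>2))"
    by (simp add: diagonal sum_distrib_left)
  finally have "((\<lambda>t. Re (G t)) has_integral Re (of_real (2 * pi * (\<Sum>j\<le>N. (cmod (c j))\<^sup>2))))
      {0..2 * pi}"
    by (rule has_integral_Re)
  then show ?thesis
    by (simp add: square)
qed

theorem mainTheorem19:
  fixes T1 T2 :: "'a::chilbert \<Rightarrow> 'a" and c :: "nat \<Rightarrow> complex" and N :: nat
  assumes "bounded_clinear T1" and "bounded_clinear T2"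
    and "onorm (\<lambda>x. T1 (cadjoint T1 x) + T2 (cadjoint T2 x)) \<le> 1"
  shows "onorm (\<lambda>x. poly_op c N T1 (T2 x))
           \<le> sqrt ((1 / (2 * pi)) * integral {0..2 * pi}
                 (\<lambda>t. (cmod (\<Sum>j\<le>N. c j * exp (\<i> * t) ^ j))\<^sup>2))
       \<and> sqrt ((1 / (2 * pi)) * integral {0..2 * pi}
                 (\<lambda>t. (cmod (\<Sum>j\<le>N. c j * exp (\<i> * t) ^ j))\<^sup>2))
           = sqrt (\<Sum>j\<le>N. (cmod (c j))\<^sup>2)"
proof -
  have "(1 / (2 * pi)) * integral {0..2 * pi} (\<lambda>t. (cmod (\<Sum>j\<le>N. c j * exp (\<i> * t) ^ j))\<^sup>2)
      = (\<Sum>j\<le>N. (cmod (c j))\<^sup>2)"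
    using integral_unique [OF parseval_polynomial_circle [of c N]] by simp
  moreover have "onorm (\<lambda>x. poly_op c N T1 (T2 x)) \<le> sqrt (\<Sum>j\<le>N. (cmod (c j))\<^sup>2)"
    using onorm_poly_op_le [OF assms, of c N] by (simp add: L2_set_def)
  ultimately show ?thesis
    by simp
qed

end
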